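(* Let $T=(\{T_g\}_{g\in G},\{\gamma_{g,h}\}_{g,h\in G},u)$ and $T'=(\{T'_g\}_{g\in G},\{\gamma'_{g,h}\}_{g,h\in G},u')$ be partial actions of a group $G$ on semigroupal categories $\mathcal{C}$ and $\mathcal{C}'$ respectively, and let $(F,\{\tau_g\}_{g\in G})\colon T\to T'$ be a morphism of partial actions. Then for every object $X$ of $\mathcal{C}$, $$(\tau_e)_X\circ F(u_X)=u'_{F(X)}.$$
   Context: Semigroupal categories are (strict) categories with a tensor functor and associator satisfying the pentagon axiom; an ideal is a subcategory closed under isomorphisms and under tensoring on either side by arbitrary objects. A partial action of $G$ (unit $e$) on a semigroupal category $\mathcal{C}$ is a triple $(\{T_g\},\{\gamma_{g,h}\},u)$ together with ideals $\mathcal{C}_g$ of $\mathcal{C}$ such that: (1) $(T_g,J^g)\colon\mathcal{C}_{g^{-1}}\to\mathcal{C}_g$ is a semigroupal equivalence ($J^g\colon T_g(-)\otimes T_g(-)\Rightarrow T_g(-\otimes-)$ a natural isomorphism satisfying the hexagon axiom); (2) $\mathcal{C}_e=\mathcal{C}$ and $u\colon\mathrm{Id}_{\mathcal{C}}\Rightarrow T_e$ is a natural isomorphism of semigroupal functors, i.e. $J^e_{X,Y}\circ(u_X\otimes u_Y)=u_{X\otimes Y}$; (3) the restriction of $T_g$ to $\mathcal{C}_{g^{-1}}\cap\mathcal{C}_h$ is a semigroupal equivalence onto $\mathcal{C}_g\cap\mathcal{C}_{gh}$; (4) $\gamma_{g,h}\colon T_gT_h\Rightarrow T_{gh}$ is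 a natural isomorphism of functors $\mathcal{C}_{h^{-1}}\cap\mathcal{C}_{h^{-1}g^{-1}}\to\mathcal{C}_g\cap\mathcal{C}_{gh}$ with $J^{gh}_{X,Y}\circ((\gamma_{g,h})_X\otimes(\gamma_{g,h})_Y)=(\gamma_{g,h})_{X\otimes Y}\circ T_g(J^h_{X,Y})\circ J^g_{T_h(X),T_h(Y)}$; and moreover $(\gamma_{gh,k})_X\circ(\gamma_{g,h})_{T_k(X)}=(\gamma_{g,hk})_X\circ T_g((\gamma_{h,k})_X)$ for $X\in\mathcal{C}_{k^{-1}}\cap\mathcal{C}_{k^{-1}h^{-1}}\cap\mathcal{C}_{k^{-1}h^{-1}g^{-1}}$, and for $X\in\mathcal{C}_{g^{-1}}$ the morphisms $u_{T_g(X)}$ and $(\gamma_{e,g})_X$ are mutually inverse, as are $T_g(u_X)$ and $(\gamma_{g,e})_X$. A morphism of partial actions $(F,\{\tau_g\})\colon T\to T'$ consists of a semigroupal functor $F\colon\mathcal{C}\to\mathcal{C}'$ and, for each $g\in G$, a natural isomorphism $\tau_g\colon FT_g\Rightarrow T'_gF$ of functors from $\mathcal{C}_{g^{-1}}$ to $\mathcal{C}'_g$, such that $(\tau_{gh})_X\circ F((\gamma_{g,h})_X)=(\gamma'_{g,h})_{F(X)}\circ T'_g((\tau_h)_X)\circ(\tau_g)_{T_h(X)}$ for all $X\in\mathcal{C}_{h^{-1}}\cap\mathcal{C}_{(gh)^{-1}}$. *)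

theory Defs
  imports "HOL-Algebra.Group"
begin

text \<open>Cmp C g f is the composite g after f (defined when the codomain of f is the
domain of g). TnO / TnA are the tensor product on objects / arrows, Asc X Y Z is the
associator (X (x) Y) (x) Z -> X (x) (Y (x) Z).\<close>

record ('o,'m) scat =
  Ob  :: "'o set"
  Ar  :: "'m set"
  Dm  :: "'m \<Rightarrow> 'o"
  Cd  :: "'m \<Rightarrow> 'o"
  Idt :: "'o \<Rightarrow> 'm"
  Cmp :: "'m \<Rightarrow> 'm \<Rightarrow> 'm"
  TnO :: "'o \<Rightarrow> 'o \<Rightarrow> 'o"
  TnA :: "'m \<Rightarrow> 'm \<Rightarrow> 'm"
  Asc :: "'o \<Rightarrow> 'o \<Rightarrow> 'o \<Rightarrow> 'm"

definition homs :: "('o,'m) scat \<Rightarrow> 'o \<Rightarrow> 'o \<Rightarrow> 'm set" where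
  "homs C X Y = {f \<in> Ar C. Dm C f = X \<and> Cd C f = Y}"

definition inverse_arr :: "('o,'m) scat \<Rightarrow> 'm \<Rightarrow> 'm \<Rightarrow> bool" where
  "inverse_arr C f g \<longleftrightarrow> f \<in> Ar C \<and> g \<in> Ar C \<and> Dm C g = Cd C f \<and> Cd C g = Dm C f
     \<and> Cmp C g f = Idt C (Dm C f) \<and> Cmp C f g = Idt C (Cd C f)"

definition iso_arr :: "('o,'m) scat \<Rightarrow> 'm \<Rightarrow> bool" where
  "iso_arr C f \<longleftrightarrow> (\<exists>g. inverse_arr C f g)"

definition category :: "('o,'m) scat \<Rightarrow> bool" where
  "category C \<longleftrightarrow>
     (\<forall>f\<in>Ar C. Dm C f \<in> Ob C \<and> Cd C f \<in> Ob C) \<and>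
     (\<forall>X\<in>Ob C. Idt C X \<in> homs C X X) \<and>
     (\<forall>f\<in>Ar C. \<forall>g\<in>Ar C. Cd C f = Dm C g \<longrightarrow> Cmp C g f \<in> homs C (Dm C f) (Cd C g)) \<and>
     (\<forall>f\<in>Ar C. Cmp C f (Idt C (Dm C f)) = f \<and> Cmp C (Idt C (Cd C f)) f = f) \<and>
     (\<forall>f\<in>Ar C. \<forall>g\<in>Ar C. \<forall>h\<in>Ar C. Cd C f = Dm C g \<longrightarrow> Cd C g = Dm C h \<longrightarrow>
        Cmp C h (Cmp C g f) = Cmp C (Cmp C h g) f)"

definition semigroupal_cat :: "('o,'m) scat \<Rightarrow> bool" where
  "semigroupal_cat C \<longleftrightarrow> category C \<and>
     (\<forall>X\<in>Ob C. \<forall>Y\<in>Ob C. TnO C X Y \<in> Ob C) \<and>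
     (\<forall>f\<in>Ar C. \<forall>g\<in>Ar C.
        TnA C f g \<in> homs C (TnO C (Dm C f) (Dm C g)) (TnO C (Cd C f) (Cd C g))) \<and>
     (\<forall>X\<in>Ob C. \<forall>Y\<in>Ob C. TnA C (Idt C X) (Idt C Y) = Idt C (TnO C X Y)) \<and>
     (\<forall>f\<in>Ar C. \<forall>g\<in>Ar C. \<forall>f'\<in>Ar C. \<forall>g'\<in>Ar C.
        Cd C f = Dm C g \<longrightarrow> Cd C f' = Dm C g' \<longrightarrow>
        TnA C (Cmp C g f) (Cmp C g' f') = Cmp C (TnA C g g') (TnA C f f')) \<and>
     (\<forall>X\<in>Ob C. \<forall>Y\<in>Ob C. \<forall>Z\<in>Ob C.
        Asc C X Y Z \<in> homs C (TnO C (TnO C X Y) Z) (TnO C X (TnO C Y Z)) \<and>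
        iso_arr C (Asc C X Y Z)) \<and>
     (\<forall>f\<in>Ar C. \<forall>g\<in>Ar C. \<forall>h\<in>Ar C.
        Cmp C (Asc C (Cd C f) (Cd C g) (Cd C h)) (TnA C (TnA C f g) h) =
        Cmp C (TnA C f (TnA C g h)) (Asc C (Dm C f) (Dm C g) (Dm C h))) \<and>
     (\<forall>W\<in>Ob C. \<forall>X\<in>Ob C. \<forall>Y\<in>Ob C. \<forall>Z\<in>Ob C.
        Cmp C (Asc C W X (TnO C Y Z)) (Asc C (TnO C W X) Y Z) =
        Cmp C (TnA C (Idt C W) (Asc C X Y Z))
          (Cmp C (Asc C W (TnO C X Y) Z) (TnA C (Asc C W X Y) (Idt C Z))))"

text \<open>An ideal: a (full) subcategory, given by its set of objects, closed under
isomorphisms and under tensoring on either side by arbitrary objects.\<close>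

definition sg_ideal :: "('o,'m) scat \<Rightarrow> 'o set \<Rightarrow> bool" where
  "sg_ideal C I \<longleftrightarrow> I \<subseteq> Ob C \<and>
     (\<forall>X\<in>I. \<forall>Y\<in>Ob C. TnO C X Y \<in> I \<and> TnO C Y X \<in> I) \<and>
     (\<forall>f. iso_arr C f \<longrightarrow> Dm C f \<in> I \<longrightarrow> Cd C f \<in> I)"

definition arrs_on :: "('o,'m) scat \<Rightarrow> 'o set \<Rightarrow> 'm set" where
  "arrs_on C A = {f \<in> Ar C. Dm C f \<in> A \<and> Cd C f \<in> A}"

definition functor_on ::
  "('o,'m) scat \<Rightarrow> 'o set \<Rightarrow> ('p,'n) scat \<Rightarrow> 'p set \<Rightarrow> ('o \<Rightarrow> 'p) \<Rightarrow> ('m \<Rightarrow> 'n) \<Rightarrow> bool" where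
  "functor_on C A D B Fo Fm \<longleftrightarrow>
     (\<forall>X\<in>A. Fo X \<in> B) \<and>
     (\<forall>f\<in>arrs_on C A. Fm f \<in> homs D (Fo (Dm C f)) (Fo (Cd C f))) \<and>
     (\<forall>X\<in>A. Fm (Idt C X) = Idt D (Fo X)) \<and>
     (\<forall>f\<in>arrs_on C A. \<forall>g\<in>arrs_on C A. Cd C f = Dm C g \<longrightarrow>
        Fm (Cmp C g f) = Cmp D (Fm g) (Fm f))"

definition equivalence_on ::
  "('o,'m) scat \<Rightarrow> 'o set \<Rightarrow> ('p,'n) scat \<Rightarrow> 'p set \<Rightarrow> ('o \<Rightarrow> 'p) \<Rightarrow> ('m \<Rightarrow> 'n) \<Rightarrow> bool" where
  "equivalence_on C A D B Fo Fm \<longleftrightarrow> functor_on C A D B Fo Fm \<and>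
     (\<forall>X\<in>A. \<forall>Y\<in>A. \<forall>h\<in>homs D (Fo X) (Fo Y). \<exists>f\<in>homs C X Y. Fm f = h) \<and>
     (\<forall>X\<in>A. \<forall>Y\<in>A. \<forall>f\<in>homs C X Y. \<forall>g\<in>homs C X Y. Fm f = Fm g \<longrightarrow> f = g) \<and>
     (\<forall>Y\<in>B. \<exists>X\<in>A. \<exists>h. h \<in> homs D (Fo X) Y \<and> iso_arr D h)"

definition semigroupal_functor_on ::
  "('o,'m) scat \<Rightarrow> 'o set \<Rightarrow> ('p,'n) scat \<Rightarrow> 'p set \<Rightarrow> ('o \<Rightarrow> 'p) \<Rightarrow> ('m \<Rightarrow> 'n)
     \<Rightarrow> ('o \<Rightarrow> 'o \<Rightarrow> 'n) \<Rightarrow> bool" where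
  "semigroupal_functor_on C A D B Fo Fm J \<longleftrightarrow> functor_on C A D B Fo Fm \<and>
     (\<forall>X\<in>A. \<forall>Y\<in>A. J X Y \<in> homs D (TnO D (Fo X) (Fo Y)) (Fo (TnO C X Y)) \<and>
        iso_arr D (J X Y)) \<and>
     (\<forall>f\<in>arrs_on C A. \<forall>g\<in>arrs_on C A.
        Cmp D (J (Cd C f) (Cd C g)) (TnA D (Fm f) (Fm g)) =
        Cmp D (Fm (TnA C f g)) (J (Dm C f) (Dm C g))) \<and>
     (\<forall>X\<in>A. \<forall>Y\<in>A. \<forall>Z\<in>A.
        Cmp D (Fm (Asc C X Y Z))
          (Cmp D (J (TnO C X Y) Z) (TnA D (J X Y) (Idt D (Fo Z)))) =
        Cmp D (J X (TnO C Y Z))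
          (Cmp D (TnA D (Idt D (Fo X)) (J Y Z)) (Asc D (Fo X) (Fo Y) (Fo Z))))"

definition semigroupal_equiv_on ::
  "('o,'m) scat \<Rightarrow> 'o set \<Rightarrow> ('p,'n) scat \<Rightarrow> 'p set \<Rightarrow> ('o \<Rightarrow> 'p) \<Rightarrow> ('m \<Rightarrow> 'n)
     \<Rightarrow> ('o \<Rightarrow> 'o \<Rightarrow> 'n) \<Rightarrow> bool" where
  "semigroupal_equiv_on C A D B Fo Fm J \<longleftrightarrow>
     semigroupal_functor_on C A D B Fo Fm J \<and> equivalence_on C A D B Fo Fm"

definition nat_trans_on ::
  "('o,'m) scat \<Rightarrow> 'o set \<Rightarrow> ('p,'n) scat \<Rightarrow> ('o \<Rightarrow> 'p) \<Rightarrow> ('m \<Rightarrow> 'n)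
     \<Rightarrow> ('o \<Rightarrow> 'p) \<Rightarrow> ('m \<Rightarrow> 'n) \<Rightarrow> ('o \<Rightarrow> 'n) \<Rightarrow> bool" where
  "nat_trans_on C A D Fo Fm Go Gm \<sigma> \<longleftrightarrow>
     (\<forall>X\<in>A. \<sigma> X \<in> homs D (Fo X) (Go X)) \<and>
     (\<forall>f\<in>arrs_on C A. Cmp D (\<sigma> (Cd C f)) (Fm f) = Cmp D (Gm f) (\<sigma> (Dm C f)))"

definition nat_iso_on ::
  "('o,'m) scat \<Rightarrow> 'o set \<Rightarrow> ('p,'n) scat \<Rightarrow> ('o \<Rightarrow> 'p) \<Rightarrow> ('m \<Rightarrow> 'n)
     \<Rightarrow> ('o \<Rightarrow> 'p) \<Rightarrow> ('m \<Rightarrow> 'n) \<Rightarrow> ('o \<Rightarrow> 'n) \<Rightarrow> bool" where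
  "nat_iso_on C A D Fo Fm Go Gm \<sigma> \<longleftrightarrow>
     nat_trans_on C A D Fo Fm Go Gm \<sigma> \<and> (\<forall>X\<in>A. iso_arr D (\<sigma> X))"

record ('g,'o,'m) pact =
  Tob :: "'g \<Rightarrow> 'o \<Rightarrow> 'o"
  Tar :: "'g \<Rightarrow> 'm \<Rightarrow> 'm"
  TJ  :: "'g \<Rightarrow> 'o \<Rightarrow> 'o \<Rightarrow> 'm"
  Gam :: "'g \<Rightarrow> 'g \<Rightarrow> 'o \<Rightarrow> 'm"
  Unt :: "'o \<Rightarrow> 'm"
  Dom_id :: "'g \<Rightarrow> 'o set"

definition partial_action :: "'g monoid \<Rightarrow> ('o,'m) scat \<Rightarrow> ('g,'o,'m) pact \<Rightarrow> bool" where
  "partial_action G C T \<longleftrightarrow> group G \<and> semigroupal_cat C \<and>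
     (\<forall>g\<in>carrier G. sg_ideal C (Dom_id T g)) \<and>
     \<comment> \<open>(1)\<close>
     (\<forall>g\<in>carrier G. semigroupal_equiv_on C (Dom_id T (inv\<^bsub>G\<^esub> g)) C (Dom_id T g)
        (Tob T g) (Tar T g) (TJ T g)) \<and>
     \<comment> \<open>(2)\<close>
     Dom_id T \<one>\<^bsub>G\<^esub> = Ob C \<and>
     nat_iso_on C (Ob C) C id id (Tob T \<one>\<^bsub>G\<^esub>) (Tar T \<one>\<^bsub>G\<^esub>) (Unt T) \<and>
     (\<forall>X\<in>Ob C. \<forall>Y\<in>Ob C.
        Cmp C (TJ T \<one>\<^bsub>G\<^esub> X Y) (TnA C (Unt T X) (Unt T Y)) = Unt T (TnO C X Y)) \<and>
     \<comment> \<open>(3)\<close>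
     (\<forall>g\<in>carrier G. \<forall>h\<in>carrier G.
        semigroupal_equiv_on C (Dom_id T (inv\<^bsub>G\<^esub> g) \<inter> Dom_id T h)
          C (Dom_id T g \<inter> Dom_id T (g \<otimes>\<^bsub>G\<^esub> h)) (Tob T g) (Tar T g) (TJ T g)) \<and>
     \<comment> \<open>(4)\<close>
     (\<forall>g\<in>carrier G. \<forall>h\<in>carrier G.
        nat_iso_on C (Dom_id T (inv\<^bsub>G\<^esub> h) \<inter> Dom_id T (inv\<^bsub>G\<^esub> h \<otimes>\<^bsub>G\<^esub> inv\<^bsub>G\<^esub> g)) C
          (Tob T g \<circ> Tob T h) (Tar T g \<circ> Tar T h)
          (Tob T (g \<otimes>\<^bsub>G\<^esub> h)) (Tar T (g \<otimes>\<^bsub>G\<^esub> h)) (Gam T g h) \<and>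
        (\<forall>X\<in>Dom_id T (inv\<^bsub>G\<^esub> h) \<inter> Dom_id T (inv\<^bsub>G\<^esub> h \<otimes>\<^bsub>G\<^esub> inv\<^bsub>G\<^esub> g).
         \<forall>Y\<in>Dom_id T (inv\<^bsub>G\<^esub> h) \<inter> Dom_id T (inv\<^bsub>G\<^esub> h \<otimes>\<^bsub>G\<^esub> inv\<^bsub>G\<^esub> g).
           Cmp C (TJ T (g \<otimes>\<^bsub>G\<^esub> h) X Y) (TnA C (Gam T g h X) (Gam T g h Y)) =
           Cmp C (Gam T g h (TnO C X Y))
             (Cmp C (Tar T g (TJ T h X Y)) (TJ T g (Tob T h X) (Tob T h Y))))) \<and>
     (\<forall>g\<in>carrier G. \<forall>h\<in>carrier G. \<forall>k\<in>carrier G.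
        \<forall>X\<in>Dom_id T (inv\<^bsub>G\<^esub> k) \<inter> Dom_id T (inv\<^bsub>G\<^esub> k \<otimes>\<^bsub>G\<^esub> inv\<^bsub>G\<^esub> h)
             \<inter> Dom_id T (inv\<^bsub>G\<^esub> k \<otimes>\<^bsub>G\<^esub> inv\<^bsub>G\<^esub> h \<otimes>\<^bsub>G\<^esub> inv\<^bsub>G\<^esub> g).
          Cmp C (Gam T (g \<otimes>\<^bsub>G\<^esub> h) k X) (Gam T g h (Tob T k X)) =
          Cmp C (Gam T g (h \<otimes>\<^bsub>G\<^esub> k) X) (Tar T g (Gam T h k X))) \<and>
     (\<forall>g\<in>carrier G. \<forall>X\<in>Dom_id T (inv\<^bsub>G\<^esub> g).
        inverse_arr C (Unt T (Tob T g X)) (Gam T \<one>\<^bsub>G\<^esub> g X) \<and>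
        inverse_arr C (Tar T g (Unt T X)) (Gam T g \<one>\<^bsub>G\<^esub> X))"

text \<open>Morphism of partial actions (F, tau): T -> T'. F is a semigroupal functor with
structure isomorphisms FJ; tau_g : F T_g => T'_g F on C_{g^-1} (for which F must map
C_{g^-1} into C'_{g^-1}).\<close>

definition pact_morphism ::
  "'g monoid \<Rightarrow> ('o,'m) scat \<Rightarrow> ('p,'n) scat \<Rightarrow> ('g,'o,'m) pact \<Rightarrow> ('g,'p,'n) pact
     \<Rightarrow> ('o \<Rightarrow> 'p) \<Rightarrow> ('m \<Rightarrow> 'n) \<Rightarrow> ('o \<Rightarrow> 'o \<Rightarrow> 'n) \<Rightarrow> ('g \<Rightarrow> 'o \<Rightarrow> 'n) \<Rightarrow> bool" where
  "pact_morphism G C C' T T' Fo Fm FJ \<tau> \<longleftrightarrow>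
     semigroupal_functor_on C (Ob C) C' (Ob C') Fo Fm FJ \<and>
     (\<forall>g\<in>carrier G.
        (\<forall>X\<in>Dom_id T (inv\<^bsub>G\<^esub> g). Fo X \<in> Dom_id T' (inv\<^bsub>G\<^esub> g)) \<and>
        nat_iso_on C (Dom_id T (inv\<^bsub>G\<^esub> g)) C'
          (Fo \<circ> Tob T g) (Fm \<circ> Tar T g) (Tob T' g \<circ> Fo) (Tar T' g \<circ> Fm) (\<tau> g)) \<and>
     (\<forall>g\<in>carrier G. \<forall>h\<in>carrier G.
        \<forall>X\<in>Dom_id T (inv\<^bsub>G\<^esub> h) \<inter> Dom_id T (inv\<^bsub>G\<^esub> (g \<otimes>\<^bsub>G\<^esub> h)).
          Cmp C' (\<tau> (g \<otimes>\<^bsub>G\<^esub> h) X) (Fm (Gam T g h X)) =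
          Cmp C' (Gam T' g h (Fo X)) (Cmp C' (Tar T' g (\<tau> h X)) (\<tau> g (Tob T h X))))"

end

theory Submission
  imports Defs
begin

text \<open>Write e for the unit of G and a for the composite (\<tau>_e)_X \<circ> F(u_X). Since
\<gamma>_{e,e} inverts T_e(u), the morphism axiom at (e,e) together with naturality of \<tau>_e
at u_X gives (\<tau>_e)_X = \<gamma>'_{e,e} \<circ> T'_e(a) \<circ> (\<tau>_e)_X. Cancelling the isomorphism (\<tau>_e)_X
shows that T'_e(a) is a right inverse, hence the inverse, of \<gamma>'_{e,e}, so T'_e(a) = T'_e(u');
as T'_e is an equivalence, hence faithful, a = u'.\<close>

lemma cat_comp_homs:
  assumes "category C" "f \<in> homs C X Y" "g \<in> homs C Y Z"
  shows "Cmp C g f \<in> homs C X Z"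
  using assms unfolding category_def homs_def by auto

lemma cat_comp_assoc:
  assumes "category C" "f \<in> homs C W X" "g \<in> homs C X Y" "h \<in> homs C Y Z"
  shows "Cmp C h (Cmp C g f) = Cmp C (Cmp C h g) f"
  using assms unfolding category_def homs_def by auto

lemma cat_comp_id_right:
  assumes "category C" "f \<in> homs C X Y"
  shows "Cmp C f (Idt C X) = f"
  using assms unfolding category_def homs_def by auto

lemma cat_comp_id_left:
  assumes "category C" "f \<in> homs C X Y"
  shows "Cmp C (Idt C Y) f = f"
  using assms unfolding category_def homs_def by auto

lemma cat_homs_Ob:
  assumes "category C" "f \<in> homs C X Y"
  shows "X \<in> Ob C" "Y \<in> Ob C"
  using assms unfolding category_def homs_def by auto

lemma cat_id_homs:
  assumes "category C" "X \<in> Ob C"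
  shows "Idt C X \<in> homs C X X"
  using assms unfolding category_def by auto

lemma inverse_arr_homs:
  assumes "inverse_arr C f g"
  shows "f \<in> homs C (Dm C f) (Cd C f)" "g \<in> homs C (Cd C f) (Dm C f)"
    and "Cmp C g f = Idt C (Dm C f)" "Cmp C f g = Idt C (Cd C f)"
  using assms unfolding inverse_arr_def homs_def by auto

lemma iso_arr_cancel_right:
  assumes "category C" "iso_arr C t" "t \<in> homs C X Y"
    and "f \<in> homs C Y Z" "g \<in> homs C Y Z" "Cmp C f t = Cmp C g t"
  shows "f = g"
proof -
  obtain s where s: "inverse_arr C t s" using assms(2) unfolding iso_arr_def by blast
  have s_homs: "s \<in> homs C Y X" and ts: "Cmp C t s = Idt C Y"
    using inverse_arr_homs[OF s] assms(3) unfolding homs_def by auto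
  have "f = Cmp C (Cmp C f t) s"
    using cat_comp_assoc[OF assms(1) s_homs assms(3,4)] ts cat_comp_id_right[OF assms(1,4)]
    by simp
  also have "\<dots> = Cmp C (Cmp C g t) s" using assms(6) by simp
  also have "\<dots> = g"
    using cat_comp_assoc[OF assms(1) s_homs assms(3,5)] ts cat_comp_id_right[OF assms(1,5)]
    by simp
  finally show ?thesis .
qed

lemma inverse_arr_left_inverse_unique:
  assumes "category C" "inverse_arr C f g" "h \<in> homs C (Dm C f) (Cd C f)"
    and "Cmp C g h = Idt C (Dm C f)"
  shows "h = f"
proof -
  note f = inverse_arr_homs[OF assms(2)]
  have "h = Cmp C (Cmp C f g) h"
    using f(4) cat_comp_id_left[OF assms(1,3)] by simp
  also have "\<dots> = Cmp C f (Cmp C g h)"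
    using cat_comp_assoc[OF assms(1,3) f(2,1)] by simp
  also have "\<dots> = f" using assms(4) cat_comp_id_right[OF assms(1) f(1)] by simp
  finally show ?thesis .
qed

lemma functor_on_homs:
  assumes "functor_on C (Ob C) D B Fo Fm" "category C" "f \<in> homs C X Y"
  shows "Fm f \<in> homs D (Fo X) (Fo Y)"
  using assms unfolding functor_on_def category_def homs_def arrs_on_def by auto

lemma functor_on_comp:
  assumes "functor_on C (Ob C) D B Fo Fm" "category C" "f \<in> homs C X Y" "g \<in> homs C Y Z"
  shows "Fm (Cmp C g f) = Cmp D (Fm g) (Fm f)"
  using assms unfolding functor_on_def category_def homs_def arrs_on_def by auto

lemma functor_on_id:
  assumes "functor_on C A D B Fo Fm" "X \<in> A"
  shows "Fm (Idt C X) = Idt D (Fo X)"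
  using assms unfolding functor_on_def by auto

lemma nat_trans_on_homs:
  assumes "nat_trans_on C A D Fo Fm Go Gm \<sigma>" "X \<in> A"
  shows "\<sigma> X \<in> homs D (Fo X) (Go X)"
  using assms unfolding nat_trans_on_def by auto

lemma nat_trans_on_naturality:
  assumes "nat_trans_on C (Ob C) D Fo Fm Go Gm \<sigma>" "category C" "f \<in> homs C X Y"
  shows "Cmp D (\<sigma> Y) (Fm f) = Cmp D (Gm f) (\<sigma> X)"
  using assms unfolding nat_trans_on_def category_def homs_def arrs_on_def by auto

definition faithful_on :: "('o,'m) scat \<Rightarrow> 'o set \<Rightarrow> ('m \<Rightarrow> 'n) \<Rightarrow> bool" where
  "faithful_on C A Fm \<longleftrightarrow>
     (\<forall>X\<in>A. \<forall>Y\<in>A. \<forall>f\<in>homs C X Y. \<forall>g\<in>homs C X Y. Fm f = Fm g \<longrightarrow> f = g)"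

lemma equivalence_on_faithful_on:
  assumes "equivalence_on C A D B Fo Fm"
  shows "faithful_on C A Fm"
  using assms unfolding equivalence_on_def faithful_on_def by blast

lemma faithful_onD:
  assumes "faithful_on C A Fm" "f \<in> homs C X Y" "g \<in> homs C X Y" "X \<in> A" "Y \<in> A"
    and "Fm f = Fm g"
  shows "f = g"
  using assms unfolding faithful_on_def by blast

lemma faithful_on_eq_of_right_inverse:
  assumes "category C" "category D" "functor_on C (Ob C) D B Fo Fm" "faithful_on C (Ob C) Fm"
    and "f \<in> homs C X Y" "g \<in> homs C X Y" "inverse_arr D (Fm g) h"
    and "Cmp D h (Fm f) = Idt D (Fo X)"
  shows "f = g"
proof -
  have "Fm f = Fm g"
    using inverse_arr_left_inverse_unique[OF assms(2,7)] functor_on_homs[OF assms(3,1)] assms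
    unfolding homs_def by auto
  then show ?thesis using faithful_onD[OF assms(4,5,6)] cat_homs_Ob[OF assms(1,5)] by blast
qed

lemma mult_compatible_unit_factorization:
  assumes C: "category C" and C': "category C'"
    and F: "functor_on C (Ob C) C' (Ob C') Fo Fm"
    and T: "functor_on C (Ob C) C (Ob C) To Tm"
    and T': "functor_on C' (Ob C') C' (Ob C') To' Tm'"
    and \<tau>: "nat_trans_on C (Ob C) C' (Fo \<circ> To) (Fm \<circ> Tm) (To' \<circ> Fo) (Tm' \<circ> Fm) \<tau>"
    and u: "u \<in> homs C X (To X)" "inverse_arr C (Tm u) \<gamma>"
    and \<gamma>': "\<gamma>' \<in> homs C' (To' (To' (Fo X))) (To' (Fo X))"
    and mult: "Cmp C' (\<tau> X) (Fm \<gamma>) = Cmp C' \<gamma>' (Cmp C' (Tm' (\<tau> X)) (\<tau> (To X)))"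
  shows "Cmp C' (Cmp C' \<gamma>' (Tm' (Cmp C' (\<tau> X) (Fm u)))) (\<tau> X) = \<tau> X"
proof -
  have X: "X \<in> Ob C" and TX: "To X \<in> Ob C" using cat_homs_Ob[OF C u(1)] by auto
  have \<tau>X: "\<tau> X \<in> homs C' (Fo (To X)) (To' (Fo X))"
    and \<tau>TX: "\<tau> (To X) \<in> homs C' (Fo (To (To X))) (To' (Fo (To X)))"
    using nat_trans_on_homs[OF \<tau>] X TX by auto
  have Tu: "Tm u \<in> homs C (To X) (To (To X))" using functor_on_homs[OF T C u(1)] .
  have \<gamma>: "\<gamma> \<in> homs C (To (To X)) (To X)" and \<gamma>_Tu: "Cmp C \<gamma> (Tm u) = Idt C (To X)"
    using inverse_arr_homs[OF u(2)] Tu unfolding homs_def by auto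
  have Fu: "Fm u \<in> homs C' (Fo X) (Fo (To X))" using functor_on_homs[OF F C u(1)] .
  have FTu: "Fm (Tm u) \<in> homs C' (Fo (To X)) (Fo (To (To X)))" using functor_on_homs[OF F C Tu] .
  have F\<gamma>: "Fm \<gamma> \<in> homs C' (Fo (To (To X))) (Fo (To X))" using functor_on_homs[OF F C \<gamma>] .
  have T'\<tau>X: "Tm' (\<tau> X) \<in> homs C' (To' (Fo (To X))) (To' (To' (Fo X)))"
    using functor_on_homs[OF T' C' \<tau>X] .
  have T'Fu: "Tm' (Fm u) \<in> homs C' (To' (Fo X)) (To' (Fo (To X)))"
    using functor_on_homs[OF T' C' Fu] .
  have T'_\<tau>Fu: "Tm' (Cmp C' (\<tau> X) (Fm u)) \<in> homs C' (To' (Fo X)) (To' (To' (Fo X)))"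
    using functor_on_homs[OF T' C' cat_comp_homs[OF C' Fu \<tau>X]] .
  have \<tau>_at_u: "Cmp C' (\<tau> (To X)) (Fm (Tm u)) = Cmp C' (Tm' (Fm u)) (\<tau> X)"
    using nat_trans_on_naturality[OF \<tau> C u(1)] by simp
  have "\<tau> X = Cmp C' (\<tau> X) (Fm (Cmp C \<gamma> (Tm u)))"
    using \<gamma>_Tu functor_on_id[OF F TX] cat_comp_id_right[OF C' \<tau>X] by simp
  also have "\<dots> = Cmp C' (Cmp C' \<gamma>' (Cmp C' (Tm' (\<tau> X)) (\<tau> (To X)))) (Fm (Tm u))"
    using functor_on_comp[OF F C Tu \<gamma>] cat_comp_assoc[OF C' FTu F\<gamma> \<tau>X] mult by simp
  also have "\<dots> = Cmp C' \<gamma>' (Cmp C' (Tm' (\<tau> X)) (Cmp C' (Tm' (Fm u)) (\<tau> X)))"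
    using cat_comp_assoc[OF C' FTu cat_comp_homs[OF C' \<tau>TX T'\<tau>X] \<gamma>']
      cat_comp_assoc[OF C' FTu \<tau>TX T'\<tau>X] \<tau>_at_u by simp
  also have "\<dots> = Cmp C' (Cmp C' \<gamma>' (Tm' (Cmp C' (\<tau> X) (Fm u)))) (\<tau> X)"
    using cat_comp_assoc[OF C' \<tau>X T'Fu T'\<tau>X] cat_comp_assoc[OF C' \<tau>X T'_\<tau>Fu \<gamma>']
      functor_on_comp[OF T' C' Fu \<tau>X] by simp
  finally show ?thesis by simp
qed

lemma unit_compatible_of_mult_compatible:
  assumes C: "category C" and C': "category C'"
    and F: "functor_on C (Ob C) C' (Ob C') Fo Fm"
    and T: "functor_on C (Ob C) C (Ob C) To Tm"
    and T': "functor_on C' (Ob C') C' (Ob C') To' Tm'" "faithful_on C' (Ob C') Tm'"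
    and \<tau>: "nat_iso_on C (Ob C) C' (Fo \<circ> To) (Fm \<circ> Tm) (To' \<circ> Fo) (Tm' \<circ> Fm) \<tau>"
    and u: "u \<in> homs C X (To X)" "inverse_arr C (Tm u) \<gamma>"
    and u': "u' \<in> homs C' (Fo X) (To' (Fo X))" "inverse_arr C' (Tm' u') \<gamma>'"
    and mult: "Cmp C' (\<tau> X) (Fm \<gamma>) = Cmp C' \<gamma>' (Cmp C' (Tm' (\<tau> X)) (\<tau> (To X)))"
  shows "Cmp C' (\<tau> X) (Fm u) = u'"
proof -
  define a where "a = Cmp C' (\<tau> X) (Fm u)"
  have X: "X \<in> Ob C" using cat_homs_Ob[OF C u(1)] by simp
  have \<tau>_nat: "nat_trans_on C (Ob C) C' (Fo \<circ> To) (Fm \<circ> Tm) (To' \<circ> Fo) (Tm' \<circ> Fm) \<tau>"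
    and \<tau>X_iso: "iso_arr C' (\<tau> X)" using \<tau> X unfolding nat_iso_on_def by auto
  have \<tau>X: "\<tau> X \<in> homs C' (Fo (To X)) (To' (Fo X))" using nat_trans_on_homs[OF \<tau>_nat X] by simp
  have a: "a \<in> homs C' (Fo X) (To' (Fo X))"
    unfolding a_def using cat_comp_homs[OF C' functor_on_homs[OF F C u(1)] \<tau>X] .
  have \<gamma>': "\<gamma>' \<in> homs C' (To' (To' (Fo X))) (To' (Fo X))"
    using inverse_arr_homs(2)[OF u'(2)] functor_on_homs[OF T'(1) C' u'(1)] unfolding homs_def
    by auto
  have "Cmp C' (Cmp C' \<gamma>' (Tm' a)) (\<tau> X) = Cmp C' (Idt C' (To' (Fo X))) (\<tau> X)"
    using mult_compatible_unit_factorization[OF C C' F T T'(1) \<tau>_nat u \<gamma>' mult]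
      cat_comp_id_left[OF C' \<tau>X] unfolding a_def by simp
  then have "Cmp C' \<gamma>' (Tm' a) = Idt C' (To' (Fo X))"
    using iso_arr_cancel_right[OF C' \<tau>X_iso \<tau>X]
      cat_comp_homs[OF C' functor_on_homs[OF T'(1) C' a] \<gamma>']
      cat_id_homs[OF C' cat_homs_Ob(2)[OF C' a]] by metis
  then show ?thesis
    unfolding a_def by (rule faithful_on_eq_of_right_inverse[OF C' C' T' a[unfolded a_def] u'])
qed

lemma partial_action_unit_data:
  assumes "partial_action G C T"
  defines "e \<equiv> \<one>\<^bsub>G\<^esub>"
  shows "category C"
    and "functor_on C (Ob C) C (Ob C) (Tob T e) (Tar T e)"
    and "faithful_on C (Ob C) (Tar T e)"
    and "X \<in> Ob C \<Longrightarrow> Unt T X \<in> homs C X (Tob T e X)"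
    and "X \<in> Ob C \<Longrightarrow> inverse_arr C (Tar T e (Unt T X)) (Gam T e e X)"
proof -
  have "group G" and Ce: "Dom_id T e = Ob C"
    using assms unfolding partial_action_def e_def by auto
  then have e: "e \<in> carrier G" "inv\<^bsub>G\<^esub> e = e"
    unfolding e_def by (auto simp: group.is_monoid monoid.one_closed monoid.inv_one)
  have equiv: "semigroupal_equiv_on C (Ob C) C (Ob C) (Tob T e) (Tar T e) (TJ T e)"
    using assms(1) e Ce unfolding partial_action_def by metis
  show "category C" using assms(1) unfolding partial_action_def semigroupal_cat_def by blast
  show "functor_on C (Ob C) C (Ob C) (Tob T e) (Tar T e)"
    using equiv unfolding semigroupal_equiv_on_def semigroupal_functor_on_def by blast
  show "faithful_on C (Ob C) (Tar T e)"
    using equiv equivalence_on_faithful_on unfolding semigroupal_equiv_on_def by blast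
  show "X \<in> Ob C \<Longrightarrow> Unt T X \<in> homs C X (Tob T e X)"
    using assms(1) nat_trans_on_homs unfolding partial_action_def nat_iso_on_def e_def
    by fastforce
  show "X \<in> Ob C \<Longrightarrow> inverse_arr C (Tar T e (Unt T X)) (Gam T e e X)"
    using assms(1) e Ce unfolding partial_action_def by (metis e_def)
qed

lemma pact_morphism_unit_data:
  assumes "partial_action G C T" "pact_morphism G C C' T T' Fo Fm FJ \<tau>"
  defines "e \<equiv> \<one>\<^bsub>G\<^esub>"
  shows "functor_on C (Ob C) C' (Ob C') Fo Fm"
    and "nat_iso_on C (Ob C) C' (Fo \<circ> Tob T e) (Fm \<circ> Tar T e) (Tob T' e \<circ> Fo) (Tar T' e \<circ> Fm) (\<tau> e)"
    and "X \<in> Ob C \<Longrightarrow> Cmp C' (\<tau> e X) (Fm (Gam T e e X))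
           = Cmp C' (Gam T' e e (Fo X)) (Cmp C' (Tar T' e (\<tau> e X)) (\<tau> e (Tob T e X)))"
proof -
  have "group G" and Ce: "Dom_id T e = Ob C"
    using assms(1) unfolding partial_action_def e_def by auto
  then have e: "e \<in> carrier G" "inv\<^bsub>G\<^esub> e = e" "e \<otimes>\<^bsub>G\<^esub> e = e"
    unfolding e_def by (auto simp: group.is_monoid monoid.one_closed monoid.inv_one monoid.l_one)
  show "functor_on C (Ob C) C' (Ob C') Fo Fm"
    using assms(2) unfolding pact_morphism_def semigroupal_functor_on_def by blast
  show "nat_iso_on C (Ob C) C' (Fo \<circ> Tob T e) (Fm \<circ> Tar T e) (Tob T' e \<circ> Fo) (Tar T' e \<circ> Fm) (\<tau> e)"
    using assms(2) e Ce unfolding pact_morphism_def by metis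
  show "X \<in> Ob C \<Longrightarrow> Cmp C' (\<tau> e X) (Fm (Gam T e e X))
          = Cmp C' (Gam T' e e (Fo X)) (Cmp C' (Tar T' e (\<tau> e X)) (\<tau> e (Tob T e X)))"
    using assms(2) e Ce unfolding pact_morphism_def by (metis Int_absorb)
qed

theorem proposition3p9:
  fixes G :: "'g monoid"
    and C :: "('o,'m) scat" and C' :: "('p,'n) scat"
    and T :: "('g,'o,'m) pact" and T' :: "('g,'p,'n) pact"
    and Fo :: "'o \<Rightarrow> 'p" and Fm :: "'m \<Rightarrow> 'n" and FJ :: "'o \<Rightarrow> 'o \<Rightarrow> 'n"
    and \<tau> :: "'g \<Rightarrow> 'o \<Rightarrow> 'n"
  assumes "partial_action G C T"
    and "partial_action G C' T'"
    and "pact_morphism G C C' T T' Fo Fm FJ \<tau>"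
    and "X \<in> Ob C"
  shows "Cmp C' (\<tau> \<one>\<^bsub>G\<^esub> X) (Fm (Unt T X)) = Unt T' (Fo X)"
proof -
  note F = pact_morphism_unit_data[OF assms(1,3)]
  have FX: "Fo X \<in> Ob C'" using F(1) assms(4) unfolding functor_on_def by blast
  show ?thesis
    using unit_compatible_of_mult_compatible[OF partial_action_unit_data(1)[OF assms(1)]
        partial_action_unit_data(1)[OF assms(2)] F(1)
        partial_action_unit_data(2)[OF assms(1)] partial_action_unit_data(2,3)[OF assms(2)] F(2)
        partial_action_unit_data(4,5)[OF assms(1,4)] partial_action_unit_data(4,5)[OF assms(2) FX]
        F(3)[OF assms(4)]] .
qed

end
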